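(* Let $L\in\mathbb Z^+$ and let $\mathcal C$ be a linear $[n,k]$ MDS code over $F$ with $k<n$. Write $n-k=(L+1)u+r$ with $u\in\mathbb Z_{\ge0}$ and $r\in\{1,2,\dots,L+1\}$, and suppose $$L\le\binom{k-1+u+r}{k-1}.$$ If $\mathcal C$ is $(\tau,L)$-list decodable (for some $\tau\in\mathbb Z_{\ge0}$), then $\tau\le\frac{L(n-k)}{L+1}$.
   Context: $F=\mathrm{GF}(q)$. For $L\in\mathbb Z^+$ and $\tau\in\mathbb Z_{\ge0}$, a code $\mathcal C\subseteq F^n$ is $(\tau,L)$-list decodable if for every $y\in F^n$ at most $L$ codewords of $\mathcal C$ lie at Hamming distance at most $\tau$ from $y$. *)

theory Defs
  imports "HOL-Analysis.Analysis"
begin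

text \<open>Vectors of F^n are modelled as 'a ^ 'n with n = CARD('n); F is a finite field 'a.\<close>

definition hamming_dist :: "'a ^ 'n \<Rightarrow> 'a ^ 'n \<Rightarrow> nat" where
  "hamming_dist x y = card {i. x $ i \<noteq> y $ i}"

definition min_dist :: "('a ^ 'n) set \<Rightarrow> nat" where
  "min_dist C = Min {hamming_dist x y | x y. x \<in> C \<and> y \<in> C \<and> x \<noteq> y}"

definition linear_code :: "nat \<Rightarrow> ('a::field ^ 'n) set \<Rightarrow> bool" where
  "linear_code k C \<longleftrightarrow> vec.subspace C \<and> vec.dim C = k"

definition MDS_code :: "nat \<Rightarrow> ('a::field ^ 'n::finite) set \<Rightarrow> bool" where
  "MDS_code k C \<longleftrightarrow> linear_code k C \<and> min_dist C = CARD('n) - k + 1"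

definition list_decodable :: "nat \<Rightarrow> nat \<Rightarrow> ('a ^ 'n) set \<Rightarrow> bool" where
  "list_decodable \<tau> L C \<longleftrightarrow>
     (\<forall>y. card {c \<in> C. hamming_dist c y \<le> \<tau>} \<le> L)"

end

theory Submission
  imports Defs
begin

text \<open>Split the coordinates into a point p, a pool P of size k - 1 + u + r and L disjoint
blocks of size u, and choose L distinct (k - 1)-subsets T i of P. Since a nonzero codeword of an
MDS code vanishes on at most k - 1 coordinates, there are codewords c i vanishing on T i with
c i $ p = 1, and they are pairwise distinct. The word y that is 1 at p, agrees with c i on the
i-th block and is 0 elsewhere agrees with 0 on P and with c i on T i, p and the i-th block, so
0, c 0, ..., c (L - 1) are L + 1 codewords within distance L u + r of y; and every radius above
L (n - k) / (L + 1) is at least L u + r.\<close>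

lemma hamming_dist_le_card_Compl:
  fixes c y :: "'a ^ 'n::finite"
  assumes "\<forall>x\<in>A. c $ x = y $ x"
  shows "hamming_dist c y \<le> CARD('n) - card A"
proof -
  have "hamming_dist c y \<le> card (UNIV - A)"
    unfolding hamming_dist_def using assms by (intro card_mono) auto
  also have "\<dots> = CARD('n) - card A"
    by (simp add: card_Diff_subset)
  finally show ?thesis .
qed

lemma subspace_vanishing_nonzero:
  fixes V :: "('a::field ^ 'n::finite) set"
  assumes V: "vec.subspace V" and S: "card S < vec.dim V"
  shows "\<exists>v\<in>V. v \<noteq> 0 \<and> (\<forall>x\<in>S. v $ x = 0)"
proof (rule ccontr)
  assume H: "\<not> ?thesis"
  define f :: "'a^'n \<Rightarrow> 'a^'n" where "f v = (\<chi> x. if x \<in> S then v $ x else 0)" for v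
  have lin: "Vector_Spaces.linear (*s) (*s) f"
    unfolding Vector_Spaces.linear_iff f_def
    by (auto simp: vec_eq_iff vec.vector_space_axioms)
  have "inj_on f (vec.span V)"
  proof (rule inj_onI)
    fix a b assume ab: "a \<in> vec.span V" "b \<in> vec.span V" "f a = f b"
    have "a - b \<in> V"
      using ab V vec.span_eq_iff vec.subspace_diff by metis
    moreover have "\<forall>x\<in>S. (a - b) $ x = 0"
      using ab(3) unfolding f_def by (auto simp: vec_eq_iff) metis
    ultimately show "a = b" using H by auto
  qed
  then have dim_image: "vec.dim (f ` V) = vec.dim V"
    using vec.dim_image_eq[OF lin] by blast
  obtain B where B: "B \<subseteq> f ` V" "vec.independent B" "card B = vec.dim (f ` V)"
    using vec.basis_exists[of "f ` V"] by metis
  let ?T = "(\<lambda>x. axis x (1::'a)) ` S"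
  have "B \<subseteq> vec.span ?T"
  proof
    fix w assume "w \<in> B"
    then obtain v where w: "w = f v" using B by auto
    have "w = (\<Sum>x\<in>S. (v $ x) *s axis x 1)"
      unfolding w f_def
      by (simp add: vec_eq_iff sum_component axis_def if_distrib sum.delta cong: if_cong)
    also have "\<dots> \<in> vec.span ?T"
      by (intro vec.span_sum vec.span_scale vec.span_base) auto
    finally show "w \<in> vec.span ?T" .
  qed
  then have "card B \<le> card ?T"
    using vec.independent_span_bound[OF _ B(2)] by simp
  also have "\<dots> \<le> card S"
    by (rule card_image_le) simp
  finally show False
    using B(3) dim_image S by simp
qed

lemma MDS_code_subspace:
  "MDS_code k C \<Longrightarrow> vec.subspace C"
  unfolding MDS_code_def linear_code_def by blast

lemma MDS_code_weight_ge:
  fixes C :: "('a::{field,finite} ^ 'n::finite) set"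
  assumes "MDS_code k C" "c \<in> C" "c \<noteq> 0"
  shows "CARD('n) - k + 1 \<le> card {x. c $ x \<noteq> 0}"
proof -
  let ?D = "{hamming_dist x y | x y. x \<in> C \<and> y \<in> C \<and> x \<noteq> y}"
  have "finite ?D"
    by (rule finite_subset[of _ "{..CARD('n)}"]) (auto simp: hamming_dist_def card_mono)
  moreover have "hamming_dist c 0 \<in> ?D"
    using assms vec.subspace_0[OF MDS_code_subspace[OF assms(1)]] by auto
  ultimately have "min_dist C \<le> hamming_dist c 0"
    unfolding min_dist_def by auto
  then show ?thesis
    using assms(1) unfolding MDS_code_def hamming_dist_def by simp
qed

lemma MDS_code_vanishing_eq_0:
  fixes C :: "('a::{field,finite} ^ 'n::finite) set"
  assumes "MDS_code k C" "c \<in> C" "\<forall>x\<in>Z. c $ x = 0" "k \<le> card Z"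
  shows "c = 0"
proof (rule ccontr)
  assume "c \<noteq> 0"
  then have weight: "CARD('n) - k + 1 \<le> card {x. c $ x \<noteq> 0}"
    using MDS_code_weight_ge assms(1,2) by blast
  have "card {x. c $ x \<noteq> 0} \<le> card (UNIV - Z)"
    using assms(3) by (intro card_mono) auto
  also have "\<dots> = CARD('n) - card Z"
    by (simp add: card_Diff_subset)
  finally show False
    using weight assms(4) by linarith
qed

lemma MDS_code_interpolate:
  fixes C :: "('a::{field,finite} ^ 'n::finite) set"
  assumes MDS: "MDS_code k C" and S: "card S + 1 = k" "p \<notin> S"
  shows "\<exists>c\<in>C. (\<forall>x\<in>S. c $ x = 0) \<and> c $ p = 1"
proof -
  have sub: "vec.subspace C" and "vec.dim C = k"
    using MDS unfolding MDS_code_def linear_code_def by auto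
  then obtain c where c: "c \<in> C" "c \<noteq> 0" "\<forall>x\<in>S. c $ x = 0"
    using subspace_vanishing_nonzero[of C S] S(1) by auto
  have "c $ p \<noteq> 0"
  proof
    assume "c $ p = 0"
    then have "\<forall>x\<in>insert p S. c $ x = 0" using c(3) by simp
    moreover have "k \<le> card (insert p S)"
      using S by (cases "finite S") auto
    ultimately show False
      using MDS_code_vanishing_eq_0[OF MDS c(1)] c(2) by blast
  qed
  then show ?thesis
    using vec.subspace_scale[OF sub c(1), of "inverse (c $ p)"] c(3)
    by (intro bexI[of _ "inverse (c $ p) *s c"]) auto
qed

lemma card_Un_gt_if_neq:
  assumes "finite A" "finite B" "card A = m" "card B = m" "A \<noteq> B"
  shows "m < card (A \<union> B)"
proof (rule ccontr)
  assume "\<not> ?thesis"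
  then have "A = A \<union> B" "B = A \<union> B"
    using assms by (metis Un_upper1 Un_upper2 card_mono card_subset_eq finite_UnI le_antisym
        not_less)+
  then show False using assms(5) by simp
qed

lemma obtain_distinct_subsets:
  assumes "finite S" "L \<le> card S choose m"
  obtains T :: "nat \<Rightarrow> 'a set"
  where "inj_on T {..<L}" "\<And>i. i < L \<Longrightarrow> T i \<subseteq> S \<and> card (T i) = m"
proof -
  let ?A = "{B. B \<subseteq> S \<and> card B = m}"
  have "L \<le> card ?A"
    using assms n_subsets[OF assms(1)] by simp
  then obtain A' where A': "A' \<subseteq> ?A" "card A' = L"
    by (meson obtain_subset_with_card_n)
  moreover have "finite A'"
    using A'(1) assms(1) by (auto intro: finite_subset)
  ultimately obtain T where T: "bij_betw T {..<L} A'"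
    by (metis atLeast0LessThan ex_bij_betw_nat_finite)
  show thesis
  proof (rule that)
    show "inj_on T {..<L}"
      using T by (simp add: bij_betw_def)
    show "T i \<subseteq> S \<and> card (T i) = m" if "i < L" for i
      using bij_betwE[OF T] A'(1) that by blast
  qed
qed

lemma block_intervals_disjoint:
  fixes a i j u :: nat
  assumes "i \<noteq> j"
  shows "{a + i * u..<a + i * u + u} \<inter> {a + j * u..<a + j * u + u} = {}"
proof -
  have "{a + x * u..<a + x * u + u} \<inter> {a + y * u..<a + y * u + u} = {}" if "x < y" for x y
  proof -
    have "x * u + u \<le> y * u"
      using that by (metis Suc_leI add.commute mult_Suc mult_le_mono1)
    then show ?thesis
      by auto
  qed
  then show ?thesis
    using assms by (metis Int_commute linorder_neqE_nat)
qed

lemma obtain_coordinate_layout: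
  assumes "CARD('n) = 1 + m + L * u"
  obtains p :: "'n::finite" and P :: "'n set" and B :: "nat \<Rightarrow> 'n set"
  where "p \<notin> P" "card P = m"
    "\<And>i. i < L \<Longrightarrow> card (B i) = u \<and> p \<notin> B i \<and> B i \<inter> P = {}"
    "\<And>i j. i < L \<Longrightarrow> j < L \<Longrightarrow> i \<noteq> j \<Longrightarrow> B i \<inter> B j = {}"
proof -
  let ?N = "{0..<CARD('n)}"
  obtain g where "bij_betw g ?N (UNIV :: 'n set)"
    using ex_bij_betw_nat_finite[of "UNIV :: 'n set"] by auto
  then have g: "inj_on g ?N"
    by (simp add: bij_betw_def)
  define I where "I i = {1 + m + i * u..<1 + m + i * u + u}" for i
  have I_sub: "I i \<subseteq> ?N" if "i < L" for i
  proof -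
    have "i * u + u \<le> L * u"
      using that by (metis Suc_leI add.commute mult_Suc mult_le_mono1)
    then show ?thesis
      unfolding I_def using assms by auto
  qed
  have P_sub: "{1..<1 + m} \<subseteq> ?N" and p_in: "0 \<in> ?N"
    using assms by auto
  show thesis
  proof (rule that[of "g 0" "g ` {1..<1 + m}" "\<lambda>i. g ` I i"])
    show "g 0 \<notin> g ` {1..<1 + m}" "card (g ` {1..<1 + m}) = m"
      using inj_on_image_mem_iff[OF g p_in P_sub] card_image[OF inj_on_subset[OF g P_sub]]
      by auto
    show "card (g ` I i) = u \<and> g 0 \<notin> g ` I i \<and> g ` I i \<inter> g ` {1..<1 + m} = {}"
      if "i < L" for i
      using inj_on_image_mem_iff[OF g p_in I_sub[OF that]]
        card_image[OF inj_on_subset[OF g I_sub[OF that]]]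
        inj_on_image_Int[OF g I_sub[OF that] P_sub]
      by (auto simp: I_def)
    show "g ` I i \<inter> g ` I j = {}" if "i < L" "j < L" "i \<noteq> j" for i j
    proof -
      have "g ` I i \<inter> g ` I j = g ` (I i \<inter> I j)"
        using inj_on_image_Int[OF g I_sub[OF that(1)] I_sub[OF that(2)]] by simp
      also have "I i \<inter> I j = {}"
        unfolding I_def by (rule block_intervals_disjoint[OF that(3)])
      finally show ?thesis
        by simp
    qed
  qed
qed

lemma MDS_code_interpolants:
  fixes C :: "('a::{field,finite} ^ 'n::finite) set"
  assumes MDS: "MDS_code k C"
    and T: "inj_on T {..<L}" "\<And>i. i < L \<Longrightarrow> card (T i) + 1 = k \<and> p \<notin> T i"
  obtains c where "inj_on c {..<L}"
    "\<And>i. i < L \<Longrightarrow> c i \<in> C \<and> (\<forall>x\<in>T i. c i $ x = 0) \<and> c i $ p = 1"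
proof -
  have "\<forall>i\<in>{..<L}. \<exists>v\<in>C. (\<forall>x\<in>T i. v $ x = 0) \<and> v $ p = 1"
    using MDS_code_interpolate[OF MDS] T(2) by blast
  then obtain c where c: "\<And>i. i < L \<Longrightarrow> c i \<in> C \<and> (\<forall>x\<in>T i. c i $ x = 0) \<and> c i $ p = 1"
    by (metis lessThan_iff)
  have "inj_on c {..<L}"
  proof (rule inj_onI, rule ccontr)
    fix i j assume ij: "i \<in> {..<L}" "j \<in> {..<L}" "c i = c j" "i \<noteq> j"
    have "finite (T i)" "finite (T j)" "T i \<noteq> T j"
      using T ij by (auto simp: inj_on_def)
    then have "k \<le> card (T i \<union> T j)"
      using card_Un_gt_if_neq[of "T i" "T j" "k - 1"] T(2) ij by fastforce
    moreover have "\<forall>x\<in>T i \<union> T j. c i $ x = 0"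
      using c[of i] c[of j] ij by auto
    ultimately have "c i = 0"
      using MDS_code_vanishing_eq_0[OF MDS] c ij by blast
    then show False
      using c ij by force
  qed
  then show thesis
    using that c by blast
qed

lemma MDS_code_close_codewords:
  fixes C :: "('a::{field,finite} ^ 'n::finite) set"
  assumes MDS: "MDS_code k C" and "1 \<le> k"
    and n: "CARD('n) = k + (L + 1) * u + r" and "1 \<le> r"
    and L: "L \<le> (k - 1 + u + r) choose (k - 1)"
  obtains y X where "X \<subseteq> C" "card X = L + 1" "\<forall>c\<in>X. hamming_dist c y \<le> L * u + r"
proof -
  have "CARD('n) = 1 + (k - 1 + u + r) + L * u"
    using n \<open>1 \<le> k\<close> by (simp add: algebra_simps)
  then obtain p :: 'n and P B where layout: "p \<notin> P" "card P = k - 1 + u + r"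
    "\<And>i. i < L \<Longrightarrow> card (B i) = u \<and> p \<notin> B i \<and> B i \<inter> P = {}"
    "\<And>i j. i < L \<Longrightarrow> j < L \<Longrightarrow> i \<noteq> j \<Longrightarrow> B i \<inter> B j = {}"
    using obtain_coordinate_layout by blast
  have "L \<le> card P choose (k - 1)"
    using L layout(2) by simp
  then obtain T where T: "inj_on T {..<L}" "\<And>i. i < L \<Longrightarrow> T i \<subseteq> P \<and> card (T i) = k - 1"
    using obtain_distinct_subsets[OF finite] by blast
  have T_k: "card (T i) + 1 = k \<and> p \<notin> T i" if "i < L" for i
    using T(2)[OF that] layout(1) \<open>1 \<le> k\<close> by auto
  obtain c where c: "inj_on c {..<L}"
    "\<And>i. i < L \<Longrightarrow> c i \<in> C \<and> (\<forall>x\<in>T i. c i $ x = 0) \<and> c i $ p = 1"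
    using MDS_code_interpolants[OF MDS T(1) T_k] by blast
  define y :: "'a ^ 'n" where
    "y = (\<chi> x. if x = p then 1
               else if \<exists>i<L. x \<in> B i then c (THE i. i < L \<and> x \<in> B i) $ x else 0)"
  have y_B: "y $ x = c i $ x" if "i < L" "x \<in> B i" for i x
  proof -
    have "(THE i. i < L \<and> x \<in> B i) = i"
      using layout(4) that by (intro the_equality) blast+
    then show ?thesis
      unfolding y_def using layout(3) that by auto
  qed
  have y_p: "y $ p = 1"
    by (simp add: y_def)
  have y_P: "y $ x = 0" if "x \<in> P" for x
    unfolding y_def using layout(1,3) that by auto
  define X where "X = insert 0 (c ` {..<L})"
  have "X \<subseteq> C"
    unfolding X_def using c(2) vec.subspace_0[OF MDS_code_subspace[OF MDS]] by auto
  moreover have "card X = L + 1"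
  proof -
    have "0 \<notin> c ` {..<L}"
      using c(2) by force
    then show ?thesis
      unfolding X_def using card_image[OF c(1)] by simp
  qed
  moreover have "hamming_dist v y \<le> L * u + r" if v: "v \<in> X" for v
  proof (cases "v = 0")
    case True
    then have "hamming_dist v y \<le> CARD('n) - card P"
      using y_P by (intro hamming_dist_le_card_Compl) simp
    then show ?thesis
      using layout(2) n \<open>1 \<le> k\<close> \<open>1 \<le> r\<close> by simp
  next
    case False
    then obtain i where i: "i < L" "v = c i"
      using v unfolding X_def by auto
    let ?A = "insert p (T i \<union> B i)"
    have "T i \<inter> B i = {}" "p \<notin> T i \<union> B i"
      using T(2)[OF i(1)] layout(1) layout(3)[OF i(1)] by auto
    then have "card ?A = k + u"
      using T(2)[OF i(1)] layout(3)[OF i(1)] \<open>1 \<le> k\<close> by (simp add: card_Un_disjoint)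
    moreover have "\<forall>x\<in>?A. v $ x = y $ x"
      using c(2)[OF i(1)] y_B[OF i(1)] y_P y_p T(2)[OF i(1)] i(2) by auto
    ultimately have "hamming_dist v y \<le> CARD('n) - (k + u)"
      using hamming_dist_le_card_Compl by metis
    then show ?thesis
      using n by simp
  qed
  ultimately show thesis
    using that by blast
qed

lemma list_decoding_radius_ge:
  fixes L u r \<tau> :: nat
  assumes "r \<le> L + 1" and "real L * real ((L + 1) * u + r) / real (L + 1) < real \<tau>"
  shows "L * u + r \<le> \<tau>"
proof (rule ccontr)
  assume "\<not> ?thesis"
  then have "(\<tau> + 1) * (L + 1) \<le> (L * u + r) * (L + 1)"
    by (intro mult_le_mono1) simp
  moreover have "L * ((L + 1) * u + r) < \<tau> * (L + 1)"
    using assms(2) by (simp add: field_simps flip: of_nat_mult of_nat_add of_nat_less_iff)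
  ultimately show False
    using assms(1) by (simp add: algebra_simps)
qed

theorem mainTheorem4:
  fixes C :: "('a::{field,finite} ^ 'n::finite) set"
    and k L u r \<tau> :: nat
  assumes "L \<ge> 1"
    and "1 \<le> k" and "k < CARD('n)"
    and "MDS_code k C"
    and "CARD('n) - k = (L + 1) * u + r"
    and "1 \<le> r" and "r \<le> L + 1"
    and "L \<le> (k - 1 + u + r) choose (k - 1)"
    and "list_decodable \<tau> L C"
  shows "real \<tau> \<le> real L * real (CARD('n) - k) / real (L + 1)"
proof (rule ccontr)
  assume "\<not> ?thesis"
  then have radius: "L * u + r \<le> \<tau>"
    using list_decoding_radius_ge[OF assms(7)] assms(5) by simp
  have n: "CARD('n) = k + (L + 1) * u + r"
    using assms(3,5) by simp
  obtain y X where X: "X \<subseteq> C" "card X = L + 1" "\<forall>c\<in>X. hamming_dist c y \<le> L * u + r"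
    by (rule MDS_code_close_codewords[OF assms(4,2) n assms(6,8)])
  have "card X \<le> card {c \<in> C. hamming_dist c y \<le> \<tau>}"
    using X radius by (intro card_mono) auto
  also have "\<dots> \<le> L"
    using assms(9) unfolding list_decodable_def by blast
  finally show False
    using X(2) by simp
qed

end
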